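(* Let $\omega\in\Omega^*$ and let $\mathcal{U}$ be an ultrafilter on $\mathbb{R}_+$ containing no bounded set. Then $W^*\varphi^{\mathcal{U}}_\omega=\psi^{\mathcal{U}}_\omega$, i.e. for every $f\in L^{\infty}(\mathbb{R}_+^{\times})$, $\mathcal{U}\text{-}\lim_x\frac1x\int_0^x(Wf)_\omega(t)\,dt=e^{\mathcal{U}}\text{-}\lim_x\frac{1}{\log x}\int_1^xf^{\times}_\omega(t)\frac{dt}{t}$.
   Context: $L^{\infty}(\mathbb{R}_+)$, $L^{\infty}(\mathbb{R}_+^{\times})$: real-valued essentially bounded measurable functions on $[0,\infty)$ and $[1,\infty)$. $W:L^{\infty}(\mathbb{R}_+^{\times})\to L^{\infty}(\mathbb{R}_+)$, $(Wf)(x)=f(e^x)$, $(W^*\varphi)(f)=\varphi(Wf)$. Let $\beta\mathbb{N}_0$ be the Stone–Čech compactification of $\mathbb{N}_0$ (points = ultrafilters), $\tau$ the extension of $n\mapsto n+1$, $\Omega=(\beta\mathbb{N}_0\times[0,1])/\sim$ with $(\tau\eta,0)\sim(\eta,1)$, containing $\mathbb{R}_+$ via $(n,t)\mapsto n+t$, $\Omega^*=\Omega\setminus\mathbb{R}_+$ with flow $\tau^s(\eta,t)=(\tau^{[t+s]}\eta,t+s-[t+s])$. Each $\omega=(\eta,t)$ is identified with the ultrafilter $\{A+t:A\in\eta\}$ on $\mathbb{R}_+$; for an ultrafilter $\mathcal{V}$ on $\mathbb{R}_+$, $e^{\mathcal{V}}=\{e^A:A\in\mathcal{V}\}$ is an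 ultrafilter on $[1,\infty)$. For $g\in L^{\infty}(\mathbb{R}_+)$, $g_\omega=\omega\text{-}\lim_sg(\cdot+s)$ (weak* limit in $L^{\infty}(\mathbb{R}_+)=L^1(\mathbb{R}_+)^*$ along $\omega$), extended to $\mathbb{R}$ by $g_\omega(x)=g_{\tau^{-N}\omega}(N+x)$ for $x\in[-N,0]$. For $f\in L^{\infty}(\mathbb{R}_+^{\times})$, $f^{\times}_\omega=e^\omega\text{-}\lim_rf(r\,\cdot)$ (weak* limit in $L^{\infty}(\mathbb{R}_+^{\times})$ along $e^\omega$, $r\ge1$). Here $\varphi^{\mathcal{U}}_\omega(g)=\mathcal{U}\text{-}\lim_x\frac1x\int_0^xg_\omega(t)\,dt$ on $L^{\infty}(\mathbb{R}_+)$ and $\psi^{\mathcal{U}}_\omega(f)=e^{\mathcal{U}}\text{-}\lim_x\frac{1}{\log x}\int_1^xf^{\times}_\omega(t)\frac{dt}{t}$ on $L^{\infty}(\mathbb{R}_+^{\times})$. *)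

theory Defs
  imports "HOL-Analysis.Analysis"
begin

definition is_ultrafilter :: "'a filter \<Rightarrow> bool" where
  "is_ultrafilter F \<longleftrightarrow> F \<noteq> bot \<and> (\<forall>P. eventually P F \<or> eventually (\<lambda>x. \<not> P x) F)"

text \<open>Free (non-principal) ultrafilter on the natural numbers: a point of the remainder of beta N_0.\<close>
definition free_ultrafilter_nat :: "nat filter \<Rightarrow> bool" where
  "free_ultrafilter_nat \<eta> \<longleftrightarrow> is_ultrafilter \<eta> \<and> (\<forall>n. \<not> eventually (\<lambda>m. m = n) \<eta>)"

text \<open>The point omega = (eta, t) of Omega, viewed as the ultrafilter {A + t : A in eta} on R_+.\<close>
definition omega_filter :: "nat filter \<Rightarrow> real \<Rightarrow> real filter" where
  "omega_filter \<eta> t = filtermap (\<lambda>n. real n + t) \<eta>"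

text \<open>Measure spaces underlying L^infty(R_+) (Lebesgue measure on [0,inf)) and
  L^infty(R_+^x) (Haar measure dt/t on [1,inf)).\<close>
definition M_add :: "real measure" where
  "M_add = restrict_space lebesgue {0..}"

definition M_mult :: "real measure" where
  "M_mult = density (restrict_space lebesgue {1..}) (\<lambda>t. ennreal (1 / t))"

definition Linf :: "real measure \<Rightarrow> (real \<Rightarrow> real) \<Rightarrow> bool" where
  "Linf M g \<longleftrightarrow> g \<in> borel_measurable M \<and> (\<exists>C. AE x in M. \<bar>g x\<bar> \<le> C)"

text \<open>L is a weak* limit (in L^infty(M) = L^1(M)^*) of the family G along the filter F.\<close>
definition wstar_lim :: "real measure \<Rightarrow> 'i filter \<Rightarrow> ('i \<Rightarrow> real \<Rightarrow> real) \<Rightarrow> (real \<Rightarrow> real) \<Rightarrow> bool" where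
  "wstar_lim M F G L \<longleftrightarrow> Linf M L \<and>
     (\<forall>h. integrable M h \<longrightarrow>
        ((\<lambda>i. \<integral>x. G i x * h x \<partial>M) \<longlongrightarrow> (\<integral>x. L x * h x \<partial>M)) F)"

definition W :: "(real \<Rightarrow> real) \<Rightarrow> real \<Rightarrow> real" where
  "W f x = f (exp x)"

definition add_lim :: "real filter \<Rightarrow> (real \<Rightarrow> real) \<Rightarrow> real \<Rightarrow> real" where
  "add_lim \<omega> g = (SOME L. wstar_lim M_add \<omega> (\<lambda>s x. g (x + s)) L)"

definition mult_lim :: "real filter \<Rightarrow> (real \<Rightarrow> real) \<Rightarrow> real \<Rightarrow> real" where
  "mult_lim \<omega> f = (SOME L. wstar_lim M_mult (filtermap exp \<omega>) (\<lambda>r y. f (r * y)) L)"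

definition phi :: "real filter \<Rightarrow> real filter \<Rightarrow> (real \<Rightarrow> real) \<Rightarrow> real" where
  "phi U \<omega> g = Lim U (\<lambda>x. (1 / x) * (LINT t:{0..x}|lebesgue. add_lim \<omega> g t))"

definition psi :: "real filter \<Rightarrow> real filter \<Rightarrow> (real \<Rightarrow> real) \<Rightarrow> real" where
  "psi U \<omega> f = Lim (filtermap exp U) (\<lambda>x. (1 / ln x) * (LINT t:{1..x}|lebesgue. mult_lim \<omega> f t / t))"

end

(* Under t = e^u the measure dt/t on [1,oo) becomes Lebesgue measure on [0,oo), and W turns
   the dilations y -> e^s y into the shifts x -> x + s. Hence for every x >= 0 both
   int_0^x (W f)_omega and int_1^(e^x) f^x_omega dt/t are limits along omega of the same
   numbers int_0^x f(e^(u+s)) du, so the averages defining phi and psi agree pointwise after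
   the substitution x -> e^x; of the hypotheses on U only "eventually x >= 0" is needed.
   The analytic input is that these weak* limits exist: a bounded family in L^oo of a
   sigma-finite measure converges weak* along every ultrafilter, the limit being obtained
   from the Radon-Nikodym theorem applied to the limit functional on L^1.
*)

theory Submission
  imports Defs
begin

section \<open>Limits along ultrafilters\<close>

lemma is_ultrafilter_filtermap:
  "is_ultrafilter F \<Longrightarrow> is_ultrafilter (filtermap g F)"
  by (simp add: is_ultrafilter_def filtermap_bot_iff eventually_filtermap)

lemma Lim_filtermap: "Lim (filtermap g F) k = Lim F (\<lambda>x. k (g x))"
  unfolding Topological_Spaces.Lim_def filterlim_filtermap ..

lemma ultrafilter_tendsto_Lim:
  fixes u :: "'i \<Rightarrow> real"
  assumes F: "is_ultrafilter F" and bounded: "eventually (\<lambda>i. \<bar>u i\<bar> \<le> B) F"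
  shows "(u \<longlongrightarrow> Lim F u) F"
proof -
  have F_proper: "F \<noteq> bot" and F_decides: "\<And>P. eventually P F \<or> eventually (\<lambda>x. \<not> P x) F"
    using F by (auto simp: is_ultrafilter_def)
  have "filtermap u F \<noteq> bot" using F_proper by (simp add: filtermap_bot_iff)
  moreover have "eventually (\<lambda>x. x \<in> {-B..B}) (filtermap u F)"
    using bounded by (simp add: eventually_filtermap abs_le_iff) (auto elim: eventually_mono)
  ultimately obtain l where l: "inf (nhds l) (filtermap u F) \<noteq> bot"
    using compact_Icc[of "-B" B] unfolding compact_filter by blast
  have "(u \<longlongrightarrow> l) F"
  proof (rule topological_tendstoI)
    fix S assume S: "open S" "l \<in> S"
    show "eventually (\<lambda>i. u i \<in> S) F"
    proof (rule ccontr)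
      assume "\<not> ?thesis"
      then have "eventually (\<lambda>i. u i \<notin> S) F" using F_decides by blast
      then have "eventually (\<lambda>x. x \<notin> S) (filtermap u F)" by (simp add: eventually_filtermap)
      moreover have "eventually (\<lambda>x. x \<in> S) (nhds l)" using S by (rule eventually_nhds_in_open)
      ultimately have "eventually (\<lambda>x. False) (inf (nhds l) (filtermap u F))"
        unfolding eventually_inf by (intro exI[of _ "\<lambda>x. x \<in> S"] exI[of _ "\<lambda>x. x \<notin> S"]) auto
      with l show False by (simp add: eventually_False)
    qed
  qed
  then show ?thesis using F_proper by (simp add: tendsto_Lim)
qed

section \<open>Weak* limits of bounded families along ultrafilters\<close>

lemma integrable_mult_AE_bounded:
  fixes g h :: "'a \<Rightarrow> real"
  assumes g: "g \<in> borel_measurable M" "AE x in M. \<bar>g x\<bar> \<le> C" and h: "integrable M h"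
  shows "integrable M (\<lambda>x. g x * h x)"
    and "\<bar>\<integral>x. g x * h x \<partial>M\<bar> \<le> C * (\<integral>x. \<bar>h x\<bar> \<partial>M)"
proof -
  show int: "integrable M (\<lambda>x. g x * h x)"
    by (rule Bochner_Integration.integrable_bound[where f="\<lambda>x. C * h x"])
       (use g h in \<open>auto elim!: eventually_mono simp: abs_mult intro!: mult_right_mono\<close>)
  have "\<bar>\<integral>x. g x * h x \<partial>M\<bar> \<le> (\<integral>x. \<bar>g x * h x\<bar> \<partial>M)"
    by (rule integral_abs_bound)
  also have "\<dots> \<le> (\<integral>x. C * \<bar>h x\<bar> \<partial>M)"
    by (rule integral_mono_AE)
       (use integrable_abs[OF int] h g in \<open>auto elim!: eventually_mono simp: abs_mult intro!: mult_right_mono\<close>)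
  finally show "\<bar>\<integral>x. g x * h x \<partial>M\<bar> \<le> C * (\<integral>x. \<bar>h x\<bar> \<partial>M)" by simp
qed

lemma tendsto_L1_dominated:
  fixes s :: "nat \<Rightarrow> 'a \<Rightarrow> real"
  assumes "f \<in> borel_measurable M" "\<And>i. s i \<in> borel_measurable M" "integrable M w"
    and "AE x in M. (\<lambda>i. s i x) \<longlonglongrightarrow> f x"
    and "\<And>i. AE x in M. \<bar>s i x\<bar> \<le> w x" and "AE x in M. \<bar>f x\<bar> \<le> w x"
  shows "(\<lambda>n. \<integral>x. \<bar>s n x - f x\<bar> \<partial>M) \<longlonglongrightarrow> 0"
proof -
  have "(\<lambda>n. \<integral>x. \<bar>s n x - f x\<bar> \<partial>M) \<longlonglongrightarrow> (\<integral>x. 0 \<partial>M)"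
  proof (rule integral_dominated_convergence[where w="\<lambda>x. 2 * w x"])
    show "AE x in M. (\<lambda>i. \<bar>s i x - f x\<bar>) \<longlonglongrightarrow> 0"
      using assms(4) by eventually_elim (auto intro: tendsto_rabs_zero simp: LIM_zero_iff)
    show "AE x in M. norm \<bar>s i x - f x\<bar> \<le> 2 * w x" for i
      using assms(5)[of i] assms(6) by eventually_elim auto
  qed (use assms in auto)
  then show ?thesis by simp
qed

lemma LIMSEQ_of_abs_diff_le_null:
  fixes a e :: "nat \<Rightarrow> real"
  assumes bound: "\<And>n. \<bar>a n - l\<bar> \<le> C * e n" and null: "e \<longlonglongrightarrow> 0"
  shows "a \<longlonglongrightarrow> l"
proof -
  have majorant: "(\<lambda>n. C * e n) \<longlonglongrightarrow> 0"
    using tendsto_mult_right_zero[OF null] by simp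
  have "(\<lambda>n. a n - l) \<longlonglongrightarrow> 0"
    by (rule Lim_null_comparison[OF always_eventually majorant]) (simp add: bound)
  then show ?thesis by (simp add: LIM_zero_iff)
qed

lemma tendsto_integral_mult_L1:
  fixes g h :: "'a \<Rightarrow> real" and s :: "nat \<Rightarrow> 'a \<Rightarrow> real"
  assumes g: "g \<in> borel_measurable M" "AE x in M. \<bar>g x\<bar> \<le> C"
    and h: "integrable M h" and s: "\<And>n. integrable M (s n)"
    and lim: "(\<lambda>n. \<integral>x. \<bar>s n x - h x\<bar> \<partial>M) \<longlonglongrightarrow> 0"
  shows "(\<lambda>n. \<integral>x. g x * s n x \<partial>M) \<longlonglongrightarrow> (\<integral>x. g x * h x \<partial>M)"
proof (rule LIMSEQ_of_abs_diff_le_null[OF _ lim])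
  fix n
  have "(\<integral>x. g x * s n x \<partial>M) - (\<integral>x. g x * h x \<partial>M) = (\<integral>x. g x * (s n x - h x) \<partial>M)"
    using integrable_mult_AE_bounded(1)[OF g] s h by (simp add: right_diff_distrib)
  then show "\<bar>(\<integral>x. g x * s n x \<partial>M) - (\<integral>x. g x * h x \<partial>M)\<bar> \<le> C * (\<integral>x. \<bar>s n x - h x\<bar> \<partial>M)"
    using integrable_mult_AE_bounded(2)[OF g, of "\<lambda>x. s n x - h x"] s h by simp
qed

lemma (in sigma_finite_measure) obtain_positive_integrable:
  obtains w :: "'a \<Rightarrow> real" where "w \<in> borel_measurable M" "\<And>x. 0 < w x" "integrable M w"
proof -
  obtain h where h: "h \<in> borel_measurable M" "integral\<^sup>N M h \<noteq> \<infinity>"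
    and h_pos: "\<And>x. x \<in> space M \<Longrightarrow> 0 < h x \<and> h x < \<infinity>"
    using Ex_finite_integrable_function by auto
  define w where "w x = (if x \<in> space M then enn2real (h x) else 1)" for x
  have w_h: "ennreal (w x) = h x" if "x \<in> space M" for x
    using h_pos[OF that] that by (simp add: w_def less_top)
  have w_meas: "w \<in> borel_measurable M"
    by (rule measurable_cong[where f="\<lambda>x. enn2real (h x)", THEN iffD1]) (use h(1) in \<open>auto simp: w_def\<close>)
  have w_pos: "0 < w x" for x
    using h_pos[of x] by (auto simp: w_def enn2real_positive_iff)
  have "(\<integral>\<^sup>+x. ennreal (w x) \<partial>M) = integral\<^sup>N M h"
    by (rule nn_integral_cong) (simp add: w_h)
  then have "integrable M w"
    using h(2) w_meas w_pos by (intro integrableI_nonneg) (auto simp: less_imp_le less_top)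
  with w_meas w_pos show thesis by (rule that)
qed

text \<open>The limit functional \<open>\<Lambda>\<close> on \<open>L\<^sup>1(M)\<close> exists
  pointwise, and the set function \<open>A \<mapsto> \<Lambda>(w \<cdot> 1\<^sub>A) + C \<integral>\<^sub>A w\<close> is a finite measure absolutely
  continuous w.r.t. \<open>M\<close>. Its Radon--Nikodym density \<open>\<rho>\<close> yields the weak* limit \<open>\<rho>/w - C\<close>.\<close>
locale weak_star_ultralimit =
  fixes M :: "real measure" and w :: "real \<Rightarrow> real"
    and F :: "'i filter" and G :: "'i \<Rightarrow> real \<Rightarrow> real" and C :: real
  assumes sigma_finite: "sigma_finite_measure M"
    and weight_measurable[measurable]: "w \<in> borel_measurable M"
    and weight_pos: "\<And>x. 0 < w x"
    and weight_integrable: "integrable M w"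
    and ultrafilter: "is_ultrafilter F"
    and bound_nonneg: "0 \<le> C"
    and eventually_bounded: "eventually (\<lambda>i. G i \<in> borel_measurable M \<and> (AE x in M. \<bar>G i x\<bar> \<le> C)) F"
begin

definition lim_functional :: "(real \<Rightarrow> real) \<Rightarrow> real" where
  "lim_functional h = Lim F (\<lambda>i. \<integral>x. G i x * h x \<partial>M)"

lemma F_proper: "F \<noteq> bot"
  using ultrafilter by (simp add: is_ultrafilter_def)

lemma lim_functional:
  assumes h: "integrable M h"
  shows "((\<lambda>i. \<integral>x. G i x * h x \<partial>M) \<longlongrightarrow> lim_functional h) F"
    and "\<bar>lim_functional h\<bar> \<le> C * (\<integral>x. \<bar>h x\<bar> \<partial>M)"
proof -
  have bounded: "eventually (\<lambda>i. \<bar>\<integral>x. G i x * h x \<partial>M\<bar> \<le> C * (\<integral>x. \<bar>h x\<bar> \<partial>M)) F"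
    using eventually_bounded by eventually_elim (use integrable_mult_AE_bounded h in auto)
  show lim: "((\<lambda>i. \<integral>x. G i x * h x \<partial>M) \<longlongrightarrow> lim_functional h) F"
    unfolding lim_functional_def by (rule ultrafilter_tendsto_Lim[OF ultrafilter bounded])
  show "\<bar>lim_functional h\<bar> \<le> C * (\<integral>x. \<bar>h x\<bar> \<partial>M)"
    by (rule tendsto_upperbound[OF tendsto_rabs[OF lim] bounded F_proper])
qed

lemma lim_functional_linear:
  assumes h1: "integrable M h1" and h2: "integrable M h2"
  shows "lim_functional (\<lambda>x. a * h1 x + b * h2 x) = a * lim_functional h1 + b * lim_functional h2"
proof -
  have "eventually (\<lambda>i. a * (\<integral>x. G i x * h1 x \<partial>M) + b * (\<integral>x. G i x * h2 x \<partial>M)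
      = (\<integral>x. G i x * (a * h1 x + b * h2 x) \<partial>M)) F"
    using eventually_bounded
  proof eventually_elim
    case (elim i)
    then have "integrable M (\<lambda>x. G i x * h1 x)" "integrable M (\<lambda>x. G i x * h2 x)"
      using integrable_mult_AE_bounded h1 h2 by auto
    then show ?case by (simp add: algebra_simps)
  qed
  moreover have "((\<lambda>i. a * (\<integral>x. G i x * h1 x \<partial>M) + b * (\<integral>x. G i x * h2 x \<partial>M))
     \<longlongrightarrow> a * lim_functional h1 + b * lim_functional h2) F"
    by (intro tendsto_intros lim_functional h1 h2)
  ultimately have "((\<lambda>i. \<integral>x. G i x * (a * h1 x + b * h2 x) \<partial>M)
     \<longlongrightarrow> a * lim_functional h1 + b * lim_functional h2) F"
    using tendsto_cong by force
  then show ?thesis unfolding lim_functional_def by (intro tendsto_Lim F_proper)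
qed

lemma lim_functional_add:
  "integrable M h1 \<Longrightarrow> integrable M h2 \<Longrightarrow>
    lim_functional (\<lambda>x. h1 x + h2 x) = lim_functional h1 + lim_functional h2"
  using lim_functional_linear[of h1 h2 1 1] by simp

lemma lim_functional_cmult:
  "integrable M h \<Longrightarrow> lim_functional (\<lambda>x. c * h x) = c * lim_functional h"
  using lim_functional_linear[of h h c 0] by simp

lemma lim_functional_diff:
  "integrable M h1 \<Longrightarrow> integrable M h2 \<Longrightarrow>
    lim_functional (\<lambda>x. h1 x - h2 x) = lim_functional h1 - lim_functional h2"
  using lim_functional_linear[of h1 h2 1 "-1"] by simp

lemma lim_functional_zero: "lim_functional (\<lambda>x. 0) = 0"
  using lim_functional_cmult[of "\<lambda>x. 0" 0] by simp

lemma lim_functional_sum: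
  "finite I \<Longrightarrow> (\<And>k. k \<in> I \<Longrightarrow> integrable M (h k)) \<Longrightarrow>
    lim_functional (\<lambda>x. \<Sum>k\<in>I. h k x) = (\<Sum>k\<in>I. lim_functional (h k))"
  by (induction I rule: finite_induct) (simp_all add: lim_functional_zero lim_functional_add)

lemma lim_functional_cong_AE:
  assumes "integrable M h1" "integrable M h2" "AE x in M. h1 x = h2 x"
  shows "lim_functional h1 = lim_functional h2"
proof -
  have "eventually (\<lambda>i. (\<integral>x. G i x * h1 x \<partial>M) = (\<integral>x. G i x * h2 x \<partial>M)) F"
    using eventually_bounded
    by eventually_elim (use assms in \<open>auto intro!: integral_cong_AE elim!: eventually_mono\<close>)
  then show ?thesis unfolding lim_functional_def by (rule Lim_cong[OF _ refl])
qed

lemma lim_functional_L1_continuous: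
  assumes h: "integrable M h" and s: "\<And>n. integrable M (s n)"
    and lim: "(\<lambda>n. \<integral>x. \<bar>s n x - h x\<bar> \<partial>M) \<longlonglongrightarrow> 0"
  shows "(\<lambda>n. lim_functional (s n)) \<longlonglongrightarrow> lim_functional h"
proof (rule LIMSEQ_of_abs_diff_le_null[OF _ lim])
  show "\<bar>lim_functional (s n) - lim_functional h\<bar> \<le> C * (\<integral>x. \<bar>s n x - h x\<bar> \<partial>M)" for n
    using lim_functional(2)[of "\<lambda>x. s n x - h x"] lim_functional_diff[OF s h] s h by auto
qed

lemma integrable_weight_indicator: "A \<in> sets M \<Longrightarrow> integrable M (\<lambda>x. w x * indicator A x)"
  by (intro integrable_real_mult_indicator weight_integrable)

definition charge :: "real set \<Rightarrow> real" where
  "charge A = lim_functional (\<lambda>x. w x * indicator A x) + C * (\<integral>x. w x * indicator A x \<partial>M)"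

lemma charge_bounds:
  assumes "A \<in> sets M"
  shows "0 \<le> charge A" and "charge A \<le> 2 * C * (\<integral>x. w x * indicator A x \<partial>M)"
proof -
  have "(\<integral>x. \<bar>w x * indicator A x\<bar> \<partial>M) = (\<integral>x. w x * indicator A x \<partial>M)"
    by (intro Bochner_Integration.integral_cong)
       (auto simp: weight_pos abs_mult less_imp_le split: split_indicator)
  then show "0 \<le> charge A" "charge A \<le> 2 * C * (\<integral>x. w x * indicator A x \<partial>M)"
    using lim_functional(2)[OF integrable_weight_indicator[OF assms]] unfolding charge_def by auto
qed

lemma charge_finitely_additive:
  fixes A :: "nat \<Rightarrow> real set"
  assumes A: "\<And>i. A i \<in> sets M" and disj: "disjoint_family A"
  shows "charge (\<Union>i<n. A i) = (\<Sum>i<n. charge (A i))"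
proof -
  have "indicator (\<Union>i<n. A i) x = (\<Sum>i<n. indicator (A i) x :: real)" for x
    by (rule indicator_UN_disjoint[OF finite_lessThan])
       (use disj in \<open>auto simp: disjoint_family_on_def\<close>)
  then have sum: "(\<lambda>x. w x * indicator (\<Union>i<n. A i) x) = (\<lambda>x. \<Sum>i<n. w x * indicator (A i) x)"
    by (simp add: sum_distrib_left)
  have "lim_functional (\<lambda>x. w x * indicator (\<Union>i<n. A i) x)
      = (\<Sum>i<n. lim_functional (\<lambda>x. w x * indicator (A i) x))"
    unfolding sum by (rule lim_functional_sum) (auto intro: integrable_weight_indicator A)
  moreover have "(\<integral>x. w x * indicator (\<Union>i<n. A i) x \<partial>M) = (\<Sum>i<n. (\<integral>x. w x * indicator (A i) x \<partial>M))"
    unfolding sum by (rule Bochner_Integration.integral_sum) (auto intro: integrable_weight_indicator A)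
  ultimately show ?thesis
    unfolding charge_def by (simp add: sum.distrib sum_distrib_left)
qed

lemma charge_continuous_from_below:
  fixes A :: "nat \<Rightarrow> real set"
  assumes A: "\<And>i. A i \<in> sets M"
  shows "(\<lambda>n. charge (\<Union>i<n. A i)) \<longlonglongrightarrow> charge (\<Union>i. A i)"
proof -
  have U: "(\<Union>i<n. A i) \<in> sets M" for n using A by auto
  have U': "(\<Union>i. A i) \<in> sets M" using A by auto
  have pointwise: "(\<lambda>n. w x * indicator (\<Union>i<n. A i) x) \<longlonglongrightarrow> w x * indicator (\<Union>i. A i) x" for x
    by (intro tendsto_mult tendsto_const LIMSEQ_indicator_UN)
  have dominated: "\<bar>w x * indicator B x\<bar> \<le> w x" for x B
    by (auto simp: weight_pos abs_mult less_imp_le split: split_indicator)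
  have "(\<lambda>n. \<integral>x. \<bar>w x * indicator (\<Union>i<n. A i) x - w x * indicator (\<Union>i. A i) x\<bar> \<partial>M) \<longlonglongrightarrow> 0"
    by (rule tendsto_L1_dominated[where w=w])
       (use U U' in \<open>simp_all add: pointwise dominated weight_integrable\<close>)
  then have lim: "(\<lambda>n. lim_functional (\<lambda>x. w x * indicator (\<Union>i<n. A i) x))
      \<longlonglongrightarrow> lim_functional (\<lambda>x. w x * indicator (\<Union>i. A i) x)"
    by (intro lim_functional_L1_continuous integrable_weight_indicator U U')
  have int: "(\<lambda>n. \<integral>x. w x * indicator (\<Union>i<n. A i) x \<partial>M) \<longlonglongrightarrow> (\<integral>x. w x * indicator (\<Union>i. A i) x \<partial>M)"
    by (rule integral_dominated_convergence[where w=w])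
       (use U U' pointwise dominated weight_integrable in auto)
  show ?thesis unfolding charge_def by (rule tendsto_add[OF lim tendsto_mult_left[OF int]])
qed

lemma charge_countably_additive: "countably_additive (sets M) (\<lambda>A. ennreal (charge A))"
  unfolding countably_additive_def
proof (intro allI impI)
  fix A :: "nat \<Rightarrow> real set"
  assume "range A \<subseteq> sets M" and disj: "disjoint_family A"
  then have A: "\<And>i. A i \<in> sets M" by auto
  have "(\<lambda>n. \<Sum>i<n. charge (A i)) \<longlonglongrightarrow> charge (\<Union>i. A i)"
    using charge_continuous_from_below[of A, OF A] charge_finitely_additive[of A, OF A disj] by simp
  then have sums: "(\<lambda>i. charge (A i)) sums charge (\<Union>i. A i)" by (simp add: sums_def)
  then show "(\<Sum>i. ennreal (charge (A i))) = ennreal (charge (\<Union>(range A)))"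
    by (subst suminf_ennreal2) (use sums_summable[OF sums] charge_bounds A in \<open>auto simp: sums_iff\<close>)
qed

definition charge_measure :: "real measure" where
  "charge_measure = measure_of (space M) (sets M) (\<lambda>A. ennreal (charge A))"

lemma sets_charge_measure[simp]: "sets charge_measure = sets M"
  unfolding charge_measure_def by (rule sets.sets_measure_of_eq)

lemma emeasure_charge_measure: "A \<in> sets M \<Longrightarrow> emeasure charge_measure A = ennreal (charge A)"
  unfolding charge_measure_def
  by (rule emeasure_measure_of_sigma[OF sets.sigma_algebra_axioms _ charge_countably_additive])
     (auto simp: positive_def charge_def lim_functional_zero)

lemma charge_measure_absolutely_continuous: "absolutely_continuous M charge_measure"
  unfolding absolutely_continuous_def
proof
  fix A assume A: "A \<in> null_sets M"
  then have A_sets: "A \<in> sets M" by auto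
  have ae: "AE x in M. w x * indicator A x = 0"
    using AE_not_in[OF A] by eventually_elim auto
  have "lim_functional (\<lambda>x. w x * indicator A x) = lim_functional (\<lambda>x. 0)"
    by (rule lim_functional_cong_AE) (use integrable_weight_indicator[OF A_sets] ae in auto)
  moreover have "(\<integral>x. w x * indicator A x \<partial>M) = 0"
    by (rule integral_eq_zero_AE[OF ae])
  ultimately have "emeasure charge_measure A = 0"
    using emeasure_charge_measure[OF A_sets] by (simp add: charge_def lim_functional_zero)
  then show "A \<in> null_sets charge_measure" using A_sets by (simp add: null_sets_def)
qed

definition charge_density :: "real \<Rightarrow> ennreal" where
  "charge_density = (SOME \<rho>. \<rho> \<in> borel_measurable M \<and> density M \<rho> = charge_measure)"

lemma charge_density: "charge_density \<in> borel_measurable M" "density M charge_density = charge_measure"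
proof -
  have "\<exists>\<rho> \<in> borel_measurable M. density M \<rho> = charge_measure"
    by (rule sigma_finite_measure.Radon_Nikodym[OF sigma_finite
          charge_measure_absolutely_continuous sets_charge_measure])
  then show "charge_density \<in> borel_measurable M" "density M charge_density = charge_measure"
    unfolding charge_density_def by (metis (mono_tags, lifting) someI_ex)+
qed

lemma charge_density_measurable[measurable]: "charge_density \<in> borel_measurable M"
  by (rule charge_density(1))

lemma nn_integral_charge_density:
  "A \<in> sets M \<Longrightarrow> (\<integral>\<^sup>+x. charge_density x * indicator A x \<partial>M) = ennreal (charge A)"
  using emeasure_density[OF charge_density(1), of A] emeasure_charge_measure[of A] charge_density(2)
  by simp

lemma nn_integral_weight_indicator:
  assumes A: "A \<in> sets M"
  shows "(\<integral>\<^sup>+x. ennreal (2 * C * w x) * indicator A x \<partial>M)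
    = ennreal (2 * C * (\<integral>x. w x * indicator A x \<partial>M))"
proof -
  have "(\<integral>\<^sup>+x. ennreal (2 * C * w x) * indicator A x \<partial>M)
      = (\<integral>\<^sup>+x. ennreal (2 * C * (w x * indicator A x)) \<partial>M)"
    by (intro nn_integral_cong) (auto split: split_indicator)
  also have "\<dots> = ennreal (\<integral>x. 2 * C * (w x * indicator A x) \<partial>M)"
    by (rule nn_integral_eq_integral)
       (use integrable_weight_indicator[OF A] bound_nonneg weight_pos in
         \<open>auto simp: less_imp_le\<close>)
  finally show ?thesis by simp
qed

lemma charge_density_AE_bounded: "AE x in M. charge_density x \<le> ennreal (2 * C * w x)"
proof -
  define A where "A = {x \<in> space M. ennreal (2 * C * w x) < charge_density x}"
  have A: "A \<in> sets M" unfolding A_def by measurable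
  have finite: "(\<integral>\<^sup>+x. ennreal (2 * C * w x) * indicator A x \<partial>M) \<noteq> \<infinity>"
    using nn_integral_weight_indicator[OF A] by simp
  have le: "(\<integral>\<^sup>+x. charge_density x * indicator A x \<partial>M)
      \<le> (\<integral>\<^sup>+x. ennreal (2 * C * w x) * indicator A x \<partial>M)"
    unfolding nn_integral_charge_density[OF A] nn_integral_weight_indicator[OF A]
    using charge_bounds[OF A] by (simp add: ennreal_leI)
  have "(\<integral>\<^sup>+x. charge_density x * indicator A x - ennreal (2 * C * w x) * indicator A x \<partial>M)
     = (\<integral>\<^sup>+x. charge_density x * indicator A x \<partial>M)
       - (\<integral>\<^sup>+x. ennreal (2 * C * w x) * indicator A x \<partial>M)"
    by (rule nn_integral_diff)
       (use A finite in \<open>auto simp: A_def less_imp_le split: split_indicator\<close>)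
  also have "\<dots> = 0"
    using le finite by (intro diff_eq_0_ennreal) (auto simp: top.not_eq_extremum intro: le_less_trans)
  finally have "AE x in M. charge_density x * indicator A x - ennreal (2 * C * w x) * indicator A x = 0"
    by (subst (asm) nn_integral_0_iff_AE) (use A in auto)
  with AE_space show ?thesis
  proof eventually_elim
    case (elim x)
    then show ?case by (cases "x \<in> A") (auto simp: A_def intro: ennreal_minus_eq_0)
  qed
qed

text \<open>Clamping to \<open>[-C, C]\<close> only changes \<open>\<rho>/w - C\<close> on a null set and makes the bound hold
  everywhere.\<close>
definition ultralimit :: "real \<Rightarrow> real" where
  "ultralimit x = max (- C) (min C (enn2real (charge_density x) / w x - C))"

lemma ultralimit_measurable[measurable]: "ultralimit \<in> borel_measurable M"
  unfolding ultralimit_def by measurable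

lemma ultralimit_bounded: "\<bar>ultralimit x\<bar> \<le> C"
  unfolding ultralimit_def using bound_nonneg by auto

lemma ultralimit_AE_eq: "AE x in M. ultralimit x * w x = enn2real (charge_density x) - C * w x"
  using charge_density_AE_bounded
proof eventually_elim
  case (elim x)
  have w_pos: "0 < w x" by (rule weight_pos)
  have "enn2real (charge_density x) \<le> 2 * C * w x"
    using enn2real_mono[OF elim] bound_nonneg w_pos by (simp add: less_imp_le)
  then have "enn2real (charge_density x) / w x \<le> 2 * C" "0 \<le> enn2real (charge_density x) / w x"
    using w_pos by (auto simp: divide_le_eq mult.commute)
  then have "ultralimit x = enn2real (charge_density x) / w x - C" unfolding ultralimit_def by auto
  then show ?case using w_pos by (simp add: field_simps)
qed

lemma integral_density_fun_indicator:
  assumes A: "A \<in> sets M"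
  shows "integrable M (\<lambda>x. enn2real (charge_density x) * indicator A x)"
    and "(\<integral>x. enn2real (charge_density x) * indicator A x \<partial>M) = charge A"
proof -
  have bounded: "AE x in M. enn2real (charge_density x) \<le> 2 * C * w x"
    using charge_density_AE_bounded
    by eventually_elim (use enn2real_mono bound_nonneg weight_pos in \<open>force simp: less_imp_le\<close>)
  show int: "integrable M (\<lambda>x. enn2real (charge_density x) * indicator A x)"
    by (rule Bochner_Integration.integrable_bound[where f="\<lambda>x. 2 * C * w x"])
       (use A weight_integrable bounded in \<open>auto split: split_indicator elim!: eventually_mono\<close>)
  have "(\<integral>x. enn2real (charge_density x) * indicator A x \<partial>M)
      = enn2real (\<integral>\<^sup>+x. ennreal (enn2real (charge_density x) * indicator A x) \<partial>M)"
    by (rule integral_eq_nn_integral) (use A in auto)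
  also have "(\<integral>\<^sup>+x. ennreal (enn2real (charge_density x) * indicator A x) \<partial>M)
      = (\<integral>\<^sup>+x. charge_density x * indicator A x \<partial>M)"
    using charge_density_AE_bounded
  proof (intro nn_integral_cong_AE, eventually_elim)
    case (elim x)
    then have "charge_density x \<noteq> top" by (auto simp: top_unique)
    then show ?case by (simp add: less_top split: split_indicator)
  qed
  finally show "(\<integral>x. enn2real (charge_density x) * indicator A x \<partial>M) = charge A"
    using nn_integral_charge_density[OF A] charge_bounds(1)[OF A] by simp
qed

lemma integral_limit_weight_indicator:
  assumes A: "A \<in> sets M"
  shows "(\<integral>x. ultralimit x * (w x * indicator A x) \<partial>M) = lim_functional (\<lambda>x. w x * indicator A x)"
proof -
  have "(\<integral>x. ultralimit x * (w x * indicator A x) \<partial>M)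
      = (\<integral>x. enn2real (charge_density x) * indicator A x - C * (w x * indicator A x) \<partial>M)"
    by (rule integral_cong_AE)
       (use A ultralimit_AE_eq in \<open>auto split: split_indicator elim!: eventually_mono\<close>)
  also have "\<dots> = charge A - C * (\<integral>x. w x * indicator A x \<partial>M)"
    using integral_density_fun_indicator[OF A] integrable_weight_indicator[OF A] by simp
  finally show ?thesis unfolding charge_def by simp
qed

lemma integrable_density_weight_iff:
  "k \<in> borel_measurable M \<Longrightarrow> integrable (density M w) k \<longleftrightarrow> integrable M (\<lambda>x. w x * k x)"
  using integrable_density[where f=k and g=w and M=M] weight_pos by (simp add: less_imp_le)

lemma integrable_weight_mult: "integrable (density M w) k \<Longrightarrow> integrable M (\<lambda>x. w x * k x)"
  using integrable_density_weight_iff[of k] borel_measurable_integrable[of "density M w" k] by simp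

text \<open>Both sides are \<open>L\<^sup>1\<close>-continuous in \<open>w \<cdot> k\<close> and agree on \<open>w \<cdot> 1\<^sub>A\<close>, so they agree on all
  integrable \<open>k\<close>.\<close>
lemma lim_functional_eq_integral_ultralimit:
  assumes "integrable (density M w) k"
  shows "lim_functional (\<lambda>x. w x * k x) = (\<integral>x. ultralimit x * (w x * k x) \<partial>M)"
  using assms
proof (induct rule: integrable_induct)
  case (base A c)
  then have A: "A \<in> sets M" by simp
  have "lim_functional (\<lambda>x. w x * (indicator A x *\<^sub>R c)) = lim_functional (\<lambda>x. c * (w x * indicator A x))"
    by (simp add: mult_ac)
  also have "\<dots> = c * (\<integral>x. ultralimit x * (w x * indicator A x) \<partial>M)"
    by (simp add: lim_functional_cmult integrable_weight_indicator integral_limit_weight_indicator A)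
  also have "\<dots> = (\<integral>x. ultralimit x * (w x * (indicator A x *\<^sub>R c)) \<partial>M)"
    by (simp add: mult_ac)
  finally show ?case .
next
  case (add f g)
  have int: "integrable M (\<lambda>x. w x * f x)" "integrable M (\<lambda>x. w x * g x)"
    using add by (auto intro: integrable_weight_mult)
  have "lim_functional (\<lambda>x. w x * (f x + g x)) = lim_functional (\<lambda>x. w x * f x + w x * g x)"
    by (simp add: algebra_simps)
  also have "\<dots> = (\<integral>x. ultralimit x * (w x * f x) + ultralimit x * (w x * g x) \<partial>M)"
    using add int integrable_mult_AE_bounded(1)[OF ultralimit_measurable AE_I2[OF ultralimit_bounded]]
    by (simp add: lim_functional_add)
  also have "\<dots> = (\<integral>x. ultralimit x * (w x * (f x + g x)) \<partial>M)" by (simp add: algebra_simps)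
  finally show ?case .
next
  case (lim f s)
  have f: "integrable M (\<lambda>x. w x * f x)" and s: "\<And>i. integrable M (\<lambda>x. w x * s i x)"
    using lim(1,5) by (auto intro: integrable_weight_mult)
  have pointwise: "(\<lambda>i. w x * s i x) \<longlonglongrightarrow> w x * f x" if "x \<in> space M" for x
    using lim(3)[of x] that by (auto intro: tendsto_mult)
  have dominated: "\<bar>w x * s i x\<bar> \<le> 2 * \<bar>w x * f x\<bar>" if "x \<in> space M" for x i
    using lim(4)[of x i] that weight_pos[of x]
    by (auto simp: abs_mult less_imp_le intro: mult_left_mono)
  have "(\<lambda>n. \<integral>x. \<bar>w x * s n x - w x * f x\<bar> \<partial>M) \<longlonglongrightarrow> 0"
    by (rule tendsto_L1_dominated[where w="\<lambda>x. 2 * \<bar>w x * f x\<bar>"])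
       (use f s AE_I2[OF pointwise] AE_I2[OF dominated] in auto)
  then have "(\<lambda>i. lim_functional (\<lambda>x. w x * s i x)) \<longlonglongrightarrow> lim_functional (\<lambda>x. w x * f x)"
    and "(\<lambda>i. \<integral>x. ultralimit x * (w x * s i x) \<partial>M) \<longlonglongrightarrow> (\<integral>x. ultralimit x * (w x * f x) \<partial>M)"
    by (rule lim_functional_L1_continuous[OF f s],
        rule tendsto_integral_mult_L1[OF ultralimit_measurable AE_I2[OF ultralimit_bounded] f s])
  moreover have "(\<lambda>i. lim_functional (\<lambda>x. w x * s i x)) = (\<lambda>i. \<integral>x. ultralimit x * (w x * s i x) \<partial>M)"
    using lim(2) by simp
  ultimately show ?case using LIMSEQ_unique by metis
qed

lemma wstar_lim_ultralimit: "wstar_lim M F G ultralimit"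
  unfolding wstar_lim_def
proof safe
  show "Linf M ultralimit" unfolding Linf_def using ultralimit_bounded by auto
next
  fix h :: "real \<Rightarrow> real" assume h: "integrable M h"
  define k where "k x = h x / w x" for x
  have hk: "w x * k x = h x" for x
    using weight_pos[of x] by (simp add: k_def)
  have "k \<in> borel_measurable M"
    using h unfolding k_def by measurable
  then have "integrable (density M w) k"
    using h by (simp add: integrable_density_weight_iff hk)
  from lim_functional_eq_integral_ultralimit[OF this] have "lim_functional h = (\<integral>x. ultralimit x * h x \<partial>M)"
    by (simp add: hk)
  with lim_functional(1)[OF h]
  show "((\<lambda>i. \<integral>x. G i x * h x \<partial>M) \<longlongrightarrow> (\<integral>x. ultralimit x * h x \<partial>M)) F" by simp
qed

end

theorem wstar_lim_exists:
  assumes "sigma_finite_measure M" and "is_ultrafilter F"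
    and "eventually (\<lambda>i. G i \<in> borel_measurable M \<and> (AE x in M. \<bar>G i x\<bar> \<le> C)) F"
  shows "\<exists>L. wstar_lim M F G L"
proof -
  obtain w :: "real \<Rightarrow> real" where w: "w \<in> borel_measurable M" "\<And>x. 0 < w x" "integrable M w"
    using sigma_finite_measure.obtain_positive_integrable[OF assms(1)] by blast
  have "eventually (\<lambda>i. G i \<in> borel_measurable M \<and> (AE x in M. \<bar>G i x\<bar> \<le> max C 0)) F"
    using assms(3) by eventually_elim (force elim: AE_mp[OF _ AE_I2])
  then interpret weak_star_ultralimit M w F G "max C 0"
    by (intro weak_star_ultralimit.intro) (simp_all add: assms(1,2) w)
  show ?thesis using wstar_lim_ultralimit by blast
qed

section \<open>The substitution \<open>t = e\<^sup>u\<close> between \<open>M_add\<close> and \<open>M_mult\<close>\<close>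

lemma measurable_lebesgue_on_compose_inverse:
  fixes \<phi> g k :: "real \<Rightarrow> real"
  assumes S: "S \<in> sets lebesgue" and T: "T \<in> sets lebesgue"
    and \<phi>: "\<phi> \<in> borel_measurable (lebesgue_on T)"
    and maps: "\<And>x. x \<in> S \<Longrightarrow> g x \<in> T" and left_inverse: "\<And>x. x \<in> S \<Longrightarrow> k (g x) = x"
    and right_inverse: "\<And>y. y \<in> T \<Longrightarrow> g (k y) = y" and k: "k differentiable_on T"
  shows "(\<lambda>x. \<phi> (g x)) \<in> borel_measurable (lebesgue_on S)"
  unfolding borel_measurable_lebesgue_on_preimage_borel[OF S]
proof (intro allI impI)
  fix B :: "real set" assume B: "B \<in> sets borel"
  have "{y \<in> T. \<phi> y \<in> B} \<in> sets lebesgue"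
    using \<phi> B unfolding borel_measurable_lebesgue_on_preimage_borel[OF T] by blast
  then have "k ` {y \<in> T. \<phi> y \<in> B} \<in> sets lebesgue"
    by (rule differentiable_image_in_sets_lebesgue) (auto intro: differentiable_on_subset[OF k])
  moreover have "{x \<in> S. \<phi> (g x) \<in> B} = S \<inter> k ` {y \<in> T. \<phi> y \<in> B}"
    using maps left_inverse right_inverse by (auto intro!: image_eqI[where x="g _"])
  ultimately show "{x \<in> S. \<phi> (g x) \<in> B} \<in> sets lebesgue" using S by auto
qed

lemma AE_lebesgue_on_compose_inverse:
  fixes g k :: "real \<Rightarrow> real"
  assumes S: "S \<in> sets lebesgue" and T: "T \<in> sets lebesgue"
    and maps: "\<And>x. x \<in> S \<Longrightarrow> g x \<in> T" and left_inverse: "\<And>x. x \<in> S \<Longrightarrow> k (g x) = x"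
    and k: "k differentiable_on T" and ae: "AE y in lebesgue_on T. P y"
  shows "AE x in lebesgue_on S. P (g x)"
proof -
  have "AE y in lebesgue. y \<in> T \<longrightarrow> P y"
    using ae T by (subst (asm) AE_restrict_space_iff) auto
  then obtain N where exceptional: "{y \<in> space lebesgue. \<not> (y \<in> T \<longrightarrow> P y)} \<subseteq> N"
    and null: "emeasure lebesgue N = 0" "N \<in> sets lebesgue"
    by (erule AE_E)
  have "negligible (N \<inter> T)"
    using null_set_Int2[OF null_setsI[OF null] T] by (simp add: negligible_iff_null_sets)
  then have "negligible (k ` (N \<inter> T))"
    by (rule negligible_differentiable_image_negligible[OF order_refl])
       (auto intro: differentiable_on_subset[OF k])
  moreover have "{x. \<not> (x \<in> S \<longrightarrow> P (g x))} \<subseteq> k ` (N \<inter> T)"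
    using exceptional maps left_inverse by (auto intro!: image_eqI[where x="g _"])
  ultimately have "AE x in lebesgue. x \<in> S \<longrightarrow> P (g x)"
    by (intro AE_I'[where N="k ` (N \<inter> T)"]) (auto simp: negligible_iff_null_sets)
  then show ?thesis
    using S by (subst AE_restrict_space_iff) auto
qed

lemma sigma_finite_M_add: "sigma_finite_measure M_add"
proof -
  obtain A :: "real set set" where A: "countable A" "A \<subseteq> sets lborel" "\<Union>A = UNIV"
    and finite: "\<forall>a\<in>A. emeasure lborel a \<noteq> \<infinity>"
    using lborel.sigma_finite_countable by auto
  have "sigma_finite_measure (lebesgue :: real measure)"
    by (rule sigma_finite_measure.intro, rule exI[of _ A])
       (use A finite in auto)
  then show ?thesis
    unfolding M_add_def by (rule sigma_finite_measure_restrict_space) auto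
qed

lemma borel_measurable_M_add: "borel_measurable M_add = borel_measurable (lebesgue_on {0..})"
  unfolding M_add_def ..

lemma borel_measurable_M_mult: "borel_measurable M_mult = borel_measurable (lebesgue_on {1..})"
  unfolding M_mult_def by (rule measurable_cong_sets) auto

lemma AE_M_add: "(AE x in M_add. P x) \<longleftrightarrow> (AE x in lebesgue_on {0..}. P x)"
  unfolding M_add_def ..

lemma inverse_measurable_lebesgue_on:
  "(\<lambda>t. 1 / t) \<in> borel_measurable (lebesgue_on (S :: real set))"
  by (rule measurable_restrict_space1) (simp add: measurable_completion)

lemma AE_M_mult: "(AE y in M_mult. P y) \<longleftrightarrow> (AE y in lebesgue_on {1..}. P y)"
proof -
  have "(AE y in M_mult. P y) \<longleftrightarrow> (AE y in lebesgue_on {1..}. 0 < ennreal (1 / y) \<longrightarrow> P y)"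
    unfolding M_mult_def
    by (rule AE_density[OF measurable_compose[OF inverse_measurable_lebesgue_on measurable_ennreal]])
  also have "\<dots> \<longleftrightarrow> (AE y in lebesgue_on {1..}. P y)"
    by (rule AE_cong) (auto simp: space_restrict_space)
  finally show ?thesis .
qed

lemma integrable_M_add_iff:
  fixes k :: "real \<Rightarrow> real"
  shows "integrable M_add k \<longleftrightarrow> k absolutely_integrable_on {0..}"
  unfolding M_add_def set_integrable_def by (subst integrable_restrict_space) auto

lemma integral_M_add:
  fixes k :: "real \<Rightarrow> real"
  shows "integral\<^sup>L M_add k = (LINT x:{0..}|lebesgue. k x)"
  unfolding M_add_def set_lebesgue_integral_def by (subst integral_restrict_space) auto

lemma
  fixes \<phi> :: "real \<Rightarrow> real"
  assumes "\<phi> \<in> borel_measurable M_mult"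
  shows integrable_M_mult_iff: "integrable M_mult \<phi> \<longleftrightarrow> (\<lambda>t. \<phi> t / t) absolutely_integrable_on {1..}"
    and integral_M_mult: "integral\<^sup>L M_mult \<phi> = (LINT t:{1..}|lebesgue. \<phi> t / t)"
proof -
  have \<phi>: "\<phi> \<in> borel_measurable (lebesgue_on {1..})"
    using assms by (simp only: borel_measurable_M_mult)
  have nonneg: "AE t in lebesgue_on {1..}. 0 \<le> 1 / (t::real)"
    by (rule AE_I2) (auto simp: space_restrict_space)
  have "integrable M_mult \<phi> \<longleftrightarrow> integrable (lebesgue_on {1..}) (\<lambda>t. (1 / t) *\<^sub>R \<phi> t)"
    unfolding M_mult_def by (rule integrable_density[OF \<phi> inverse_measurable_lebesgue_on nonneg])
  also have "\<dots> \<longleftrightarrow> (\<lambda>t. \<phi> t / t) absolutely_integrable_on {1..}"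
    unfolding set_integrable_def by (subst integrable_restrict_space) auto
  finally show "integrable M_mult \<phi> \<longleftrightarrow> (\<lambda>t. \<phi> t / t) absolutely_integrable_on {1..}" .
  have "integral\<^sup>L M_mult \<phi> = integral\<^sup>L (lebesgue_on {1..}) (\<lambda>t. (1 / t) *\<^sub>R \<phi> t)"
    unfolding M_mult_def by (rule integral_density[OF \<phi> inverse_measurable_lebesgue_on nonneg])
  also have "\<dots> = (LINT t:{1..}|lebesgue. \<phi> t / t)"
    unfolding set_lebesgue_integral_def by (subst integral_restrict_space) auto
  finally show "integral\<^sup>L M_mult \<phi> = (LINT t:{1..}|lebesgue. \<phi> t / t)" .
qed

lemma exp_image_atLeast_0: "exp ` {0..} = {1::real..}"
proof safe
  fix y :: real assume "1 \<le> y"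
  then show "y \<in> exp ` {0..}" by (intro image_eqI[of _ _ "ln y"]) auto
qed auto

lemma differentiable_on_ln_minus: "(\<lambda>y. ln y - s) differentiable_on {1::real..}"
proof -
  have "(\<lambda>y. ln y - s) differentiable at y within {1..}" if "1 \<le> y" for y
    using DERIV_ln[of y] that
    by (intro differentiable_diff differentiable_const)
       (auto simp: real_differentiable_def intro: has_field_derivative_at_within)
  then show ?thesis by (auto simp: differentiable_on_def)
qed

lemma
  fixes \<phi> :: "real \<Rightarrow> real"
  assumes \<phi>: "\<phi> \<in> borel_measurable M_mult"
  shows integrable_M_mult_iff_exp: "integrable M_mult \<phi> \<longleftrightarrow> integrable M_add (\<lambda>x. \<phi> (exp x))"
    and integral_M_mult_exp: "integral\<^sup>L M_mult \<phi> = integral\<^sup>L M_add (\<lambda>x. \<phi> (exp x))"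
proof -
  have "(\<lambda>x. \<bar>exp x\<bar> * (\<phi> (exp x) / exp x)) absolutely_integrable_on {0..} \<and>
      integral {0..} (\<lambda>x. \<bar>exp x\<bar> * (\<phi> (exp x) / exp x)) = b
    \<longleftrightarrow> (\<lambda>t. \<phi> t / t) absolutely_integrable_on exp ` {0..} \<and> integral (exp ` {0..}) (\<lambda>t. \<phi> t / t) = b"
    for b
    by (rule has_absolute_integral_change_of_variables_1')
       (auto intro: DERIV_exp[THEN has_field_derivative_at_within] simp: inj_on_def)
  then have change: "(\<lambda>x. \<phi> (exp x)) absolutely_integrable_on {0..} \<and> integral {0..} (\<lambda>x. \<phi> (exp x)) = b
    \<longleftrightarrow> (\<lambda>t. \<phi> t / t) absolutely_integrable_on {1..} \<and> integral {1..} (\<lambda>t. \<phi> t / t) = b" for b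
    by (simp add: exp_image_atLeast_0)
  show integrable: "integrable M_mult \<phi> \<longleftrightarrow> integrable M_add (\<lambda>x. \<phi> (exp x))"
    unfolding integrable_M_mult_iff[OF \<phi>] integrable_M_add_iff using change by blast
  show "integral\<^sup>L M_mult \<phi> = integral\<^sup>L M_add (\<lambda>x. \<phi> (exp x))"
  proof (cases "integrable M_mult \<phi>")
    case True
    then have mult: "(\<lambda>t. \<phi> t / t) absolutely_integrable_on {1..}"
      using integrable_M_mult_iff[OF \<phi>] by simp
    then have add: "(\<lambda>x. \<phi> (exp x)) absolutely_integrable_on {0..}"
      using change by blast
    have "integral {0..} (\<lambda>x. \<phi> (exp x)) = integral {1..} (\<lambda>t. \<phi> t / t)"
      using change mult by blast
    then show ?thesis
      unfolding integral_M_mult[OF \<phi>] integral_M_add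
      using set_lebesgue_integral_eq_integral(2)[OF mult] set_lebesgue_integral_eq_integral(2)[OF add]
      by simp
  next
    case False
    then show ?thesis using integrable by (simp add: not_integrable_integral_eq)
  qed
qed

lemma differentiable_on_exp_real: "(exp :: real \<Rightarrow> real) differentiable_on S"
  unfolding differentiable_on_def real_differentiable_def
  using DERIV_exp has_field_derivative_at_within by blast

lemma measurable_M_add_exp_shift:
  fixes \<phi> :: "real \<Rightarrow> real"
  assumes "\<phi> \<in> borel_measurable M_mult" "0 \<le> s"
  shows "(\<lambda>x. \<phi> (exp (x + s))) \<in> borel_measurable M_add"
  unfolding borel_measurable_M_add
  by (rule measurable_lebesgue_on_compose_inverse[where k="\<lambda>y. ln y - s" and T="{1..}"])
     (use assms differentiable_on_ln_minus in \<open>auto simp: borel_measurable_M_mult\<close>)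

lemma AE_M_add_exp_shift:
  assumes "AE y in M_mult. P y" "0 \<le> s"
  shows "AE x in M_add. P (exp (x + s))"
  unfolding AE_M_add
  by (rule AE_lebesgue_on_compose_inverse[where k="\<lambda>y. ln y - s" and T="{1..}"])
     (use assms differentiable_on_ln_minus in \<open>auto simp: AE_M_mult\<close>)

lemma measurable_M_mult_ln:
  fixes \<psi> :: "real \<Rightarrow> real"
  assumes "\<psi> \<in> borel_measurable M_add"
  shows "(\<lambda>y. \<psi> (ln y)) \<in> borel_measurable M_mult"
  unfolding borel_measurable_M_mult
  by (rule measurable_lebesgue_on_compose_inverse[where k=exp and T="{0..}"])
     (use assms differentiable_on_exp_real in \<open>auto simp: borel_measurable_M_add\<close>)

lemma AE_M_mult_ln:
  assumes "AE x in M_add. P x"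
  shows "AE y in M_mult. P (ln y)"
  unfolding AE_M_mult
  by (rule AE_lebesgue_on_compose_inverse[where k=exp and T="{0..}"])
     (use assms differentiable_on_exp_real in \<open>auto simp: AE_M_add\<close>)

lemma measurable_M_mult_dilate:
  fixes \<phi> :: "real \<Rightarrow> real"
  assumes \<phi>: "\<phi> \<in> borel_measurable M_mult" and r: "1 \<le> r"
  shows "(\<lambda>y. \<phi> (r * y)) \<in> borel_measurable M_mult"
proof -
  have maps: "r * y \<in> {1..}" if "y \<in> {1..}" for y
    using mult_mono[OF r _ order_trans[OF zero_le_one r] zero_le_one, of y] that by simp
  have inverse: "(\<lambda>y. y / r) differentiable_on {1..}"
    using r by (simp add: differentiable_on_def)
  show ?thesis
    unfolding borel_measurable_M_mult
    by (rule measurable_lebesgue_on_compose_inverse[OF _ _ _ maps _ _ inverse])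
       (use \<phi> r in \<open>simp_all add: borel_measurable_M_mult\<close>)
qed

lemma integral_M_mult_dilate:
  fixes f h :: "real \<Rightarrow> real"
  assumes f: "f \<in> borel_measurable M_mult" and h: "h \<in> borel_measurable M_mult" and s: "0 \<le> s"
  shows "(\<integral>y. f (exp s * y) * h y \<partial>M_mult) = (\<integral>x. f (exp (x + s)) * h (exp x) \<partial>M_add)"
proof -
  have "(\<lambda>y. f (exp s * y) * h y) \<in> borel_measurable M_mult"
    using measurable_M_mult_dilate[OF f, of "exp s"] h s by simp
  from integral_M_mult_exp[OF this] show ?thesis by (simp add: exp_add mult.commute)
qed

lemma integral_M_add_indicator:
  fixes g :: "real \<Rightarrow> real"
  shows "0 \<le> x \<Longrightarrow> (\<integral>u. g u * indicator {0..x} u \<partial>M_add) = (LINT u:{0..x}|lebesgue. g u)"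
  unfolding integral_M_add set_lebesgue_integral_def
  by (intro Bochner_Integration.integral_cong) (auto split: split_indicator)

lemma interval_in_sets_M_mult: "{1..y} \<in> sets M_mult"
  by (auto simp: M_mult_def sets_restrict_space_iff)

lemma integral_M_mult_indicator:
  fixes g :: "real \<Rightarrow> real"
  assumes "g \<in> borel_measurable M_mult"
  shows "(\<integral>u. g u * indicator {1..y} u \<partial>M_mult) = (LINT u:{1..y}|lebesgue. g u / u)"
proof -
  have meas: "(\<lambda>u. g u * indicator {1..y} u) \<in> borel_measurable M_mult"
    using assms interval_in_sets_M_mult by measurable
  show ?thesis
    unfolding integral_M_mult[OF meas] set_lebesgue_integral_def
    by (intro Bochner_Integration.integral_cong) (auto split: split_indicator)
qed

lemma wstar_lim_M_mult_ln:
  assumes nonneg: "eventually (\<lambda>s. 0 \<le> s) \<omega>" and f: "f \<in> borel_measurable M_mult"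
    and L: "wstar_lim M_add \<omega> (\<lambda>s x. f (exp (x + s))) L"
  shows "wstar_lim M_mult (filtermap exp \<omega>) (\<lambda>r y. f (r * y)) (\<lambda>y. L (ln y))"
  unfolding wstar_lim_def
proof safe
  obtain C where L_meas: "L \<in> borel_measurable M_add" and L_bounded: "AE x in M_add. \<bar>L x\<bar> \<le> C"
    using L by (auto simp: wstar_lim_def Linf_def)
  then show "Linf M_mult (\<lambda>y. L (ln y))"
    unfolding Linf_def using measurable_M_mult_ln[OF L_meas] AE_M_mult_ln[OF L_bounded] by blast
  fix h :: "real \<Rightarrow> real" assume h: "integrable M_mult h"
  then have h_meas: "h \<in> borel_measurable M_mult" by simp
  have "integrable M_add (\<lambda>x. h (exp x))"
    using h integrable_M_mult_iff_exp[OF h_meas] by simp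
  then have "((\<lambda>s. \<integral>x. f (exp (x + s)) * h (exp x) \<partial>M_add) \<longlongrightarrow> (\<integral>x. L x * h (exp x) \<partial>M_add)) \<omega>"
    using L by (simp add: wstar_lim_def)
  moreover have "eventually (\<lambda>s. (\<integral>y. f (exp s * y) * h y \<partial>M_mult)
      = (\<integral>x. f (exp (x + s)) * h (exp x) \<partial>M_add)) \<omega>"
    using nonneg by eventually_elim (rule integral_M_mult_dilate[OF f h_meas])
  moreover have "(\<integral>y. L (ln y) * h y \<partial>M_mult) = (\<integral>x. L x * h (exp x) \<partial>M_add)"
    using integral_M_mult_exp[of "\<lambda>y. L (ln y) * h y"] measurable_M_mult_ln[OF L_meas] h_meas
    by simp
  ultimately show "((\<lambda>r. \<integral>y. f (r * y) * h y \<partial>M_mult) \<longlongrightarrow> (\<integral>y. L (ln y) * h y \<partial>M_mult))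
      (filtermap exp \<omega>)"
    unfolding filterlim_filtermap by (simp add: tendsto_cong)
qed

lemma wstar_lim_add_lim_mult_lim:
  assumes \<omega>: "is_ultrafilter \<omega>" "eventually (\<lambda>s. 0 \<le> s) \<omega>" and f: "Linf M_mult f"
  shows "wstar_lim M_add \<omega> (\<lambda>s x. W f (x + s)) (add_lim \<omega> (W f))"
    and "wstar_lim M_mult (filtermap exp \<omega>) (\<lambda>r y. f (r * y)) (mult_lim \<omega> f)"
proof -
  obtain C where f_meas: "f \<in> borel_measurable M_mult" and f_bounded: "AE y in M_mult. \<bar>f y\<bar> \<le> C"
    using f by (auto simp: Linf_def)
  have "eventually (\<lambda>s. (\<lambda>x. W f (x + s)) \<in> borel_measurable M_add
      \<and> (AE x in M_add. \<bar>W f (x + s)\<bar> \<le> C)) \<omega>"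
    using \<omega>(2) by eventually_elim
      (simp add: W_def measurable_M_add_exp_shift[OF f_meas] AE_M_add_exp_shift[OF f_bounded])
  then have "\<exists>L. wstar_lim M_add \<omega> (\<lambda>s x. W f (x + s)) L"
    by (rule wstar_lim_exists[OF sigma_finite_M_add \<omega>(1)])
  then show add: "wstar_lim M_add \<omega> (\<lambda>s x. W f (x + s)) (add_lim \<omega> (W f))"
    unfolding add_lim_def by (rule someI_ex)
  have "\<exists>L. wstar_lim M_mult (filtermap exp \<omega>) (\<lambda>r y. f (r * y)) L"
    using wstar_lim_M_mult_ln[OF \<omega>(2) f_meas add[unfolded W_def]] by blast
  then show "wstar_lim M_mult (filtermap exp \<omega>) (\<lambda>r y. f (r * y)) (mult_lim \<omega> f)"
    unfolding mult_lim_def by (rule someI_ex)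
qed

lemma integral_mult_lim_eq_integral_add_lim:
  assumes \<omega>: "is_ultrafilter \<omega>" "eventually (\<lambda>s. 0 \<le> s) \<omega>" and f: "Linf M_mult f"
    and x: "0 \<le> x"
  shows "(LINT u:{1..exp x}|lebesgue. mult_lim \<omega> f u / u) = (LINT u:{0..x}|lebesgue. add_lim \<omega> (W f) u)"
proof -
  note add = wstar_lim_add_lim_mult_lim(1)[OF assms(1-3)]
    and mult = wstar_lim_add_lim_mult_lim(2)[OF assms(1-3)]
  have f_meas: "f \<in> borel_measurable M_mult" using f by (simp add: Linf_def)
  have mult_lim_meas: "mult_lim \<omega> f \<in> borel_measurable M_mult"
    using mult by (simp add: wstar_lim_def Linf_def)
  have ind_meas: "indicator {1..exp x} \<in> borel_measurable M_mult"
    using interval_in_sets_M_mult by measurable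
  have ind_exp: "indicator {1..exp x} (exp u) = (indicator {0..x} u :: real)" for u
    by (simp split: split_indicator)
  have int_add: "integrable M_add (indicator {0..x} :: real \<Rightarrow> real)"
    unfolding M_add_def using x
    by (subst integrable_restrict_space) (auto simp: indicator_inter_arith[symmetric] Int_absorb1)
  then have int_mult: "integrable M_mult (indicator {1..exp x} :: real \<Rightarrow> real)"
    using integrable_M_mult_iff_exp[OF ind_meas] by (simp add: ind_exp)
  have add_ultralimit: "((\<lambda>s. \<integral>u. W f (u + s) * indicator {0..x} u \<partial>M_add)
      \<longlongrightarrow> (\<integral>u. add_lim \<omega> (W f) u * indicator {0..x} u \<partial>M_add)) \<omega>"
    using add int_add by (simp add: wstar_lim_def)
  have "((\<lambda>s. \<integral>u. f (exp s * u) * indicator {1..exp x} u \<partial>M_mult)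
      \<longlongrightarrow> (\<integral>u. mult_lim \<omega> f u * indicator {1..exp x} u \<partial>M_mult)) \<omega>"
    using mult int_mult by (simp add: wstar_lim_def filterlim_filtermap)
  moreover have "eventually (\<lambda>s. (\<integral>u. f (exp s * u) * indicator {1..exp x} u \<partial>M_mult)
      = (\<integral>u. W f (u + s) * indicator {0..x} u \<partial>M_add)) \<omega>"
    using \<omega>(2) by eventually_elim (simp add: integral_M_mult_dilate[OF f_meas ind_meas] ind_exp W_def)
  ultimately have mult_ultralimit: "((\<lambda>s. \<integral>u. W f (u + s) * indicator {0..x} u \<partial>M_add)
      \<longlongrightarrow> (\<integral>u. mult_lim \<omega> f u * indicator {1..exp x} u \<partial>M_mult)) \<omega>"
    by (simp add: tendsto_cong)
  have "\<omega> \<noteq> bot" using \<omega>(1) by (simp add: is_ultrafilter_def)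
  from tendsto_unique[OF this mult_ultralimit add_ultralimit] show ?thesis
    by (simp add: integral_M_add_indicator[OF x] integral_M_mult_indicator[OF mult_lim_meas])
qed

theorem theorem4p8:
  fixes \<eta> :: "nat filter" and t :: real and U :: "real filter" and f :: "real \<Rightarrow> real"
  assumes "free_ultrafilter_nat \<eta>" and "0 \<le> t" and "t < 1"
    and "is_ultrafilter U" and "eventually (\<lambda>x. 0 \<le> x) U"
    and "\<forall>B. bounded B \<longrightarrow> \<not> eventually (\<lambda>x. x \<in> B) U"
    and "Linf M_mult f"
  shows "phi U (omega_filter \<eta> t) (W f) = psi U (omega_filter \<eta> t) f"
proof -
  let ?\<omega> = "omega_filter \<eta> t"
  have ultra: "is_ultrafilter ?\<omega>"
    using assms(1) by (simp add: free_ultrafilter_nat_def omega_filter_def is_ultrafilter_filtermap)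
  have nonneg: "eventually (\<lambda>s. 0 \<le> s) ?\<omega>"
    using assms(2) by (simp add: omega_filter_def eventually_filtermap)
  have "psi U ?\<omega> f = Lim U (\<lambda>x. 1 / ln (exp x) * (LINT u:{1..exp x}|lebesgue. mult_lim ?\<omega> f u / u))"
    unfolding psi_def Lim_filtermap ..
  also have "\<dots> = phi U ?\<omega> (W f)"
    unfolding phi_def using assms(5)
    by (intro Lim_cong[OF _ refl])
       (auto elim!: eventually_mono simp: integral_mult_lim_eq_integral_add_lim[OF ultra nonneg assms(7)])
  finally show ?thesis ..
qed

end
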